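(* Let $\mathfrak{g}$ be a real Lie algebra endowed with a complex structure $J$ such that $J\xi\cap[\mathfrak{g},\mathfrak{g}]\neq\{0\}$, where $\xi$ denotes the center of $\mathfrak{g}$. Then $(\mathfrak{g},J)$ does not admit any Hermitian-symplectic structure.
   Context: A complex structure on a real Lie algebra $\mathfrak{g}$ is a linear map $J:\mathfrak{g}\to\mathfrak{g}$ with $J^2=-\mathrm{Id}$ and $[X,Y]-[JX,JY]+J[JX,Y]+J[X,JY]=0$ for all $X,Y$. A Hermitian-symplectic structure on $(\mathfrak{g},J)$ is a real $2$-form $\Omega\in\Lambda^2\mathfrak{g}^*$ that is closed with respect to the Chevalley–Eilenberg differential (i.e. $\Omega([X,Y],Z)+\Omega([Y,Z],X)+\Omega([Z,X],Y)=0$ for all $X,Y,Z$) and satisfies $\Omega(X,JX)>0$ for all non-zero $X\in\mathfrak{g}$. *)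

theory Defs
  imports "HOL-Analysis.Analysis"
begin

definition lie_algebra :: "('a::real_vector \<Rightarrow> 'a \<Rightarrow> 'a) \<Rightarrow> bool" where
  "lie_algebra br \<longleftrightarrow> bilinear br \<and> (\<forall>x. br x x = 0) \<and>
     (\<forall>x y z. br x (br y z) + br y (br z x) + br z (br x y) = 0)"

definition lie_center :: "('a::real_vector \<Rightarrow> 'a \<Rightarrow> 'a) \<Rightarrow> 'a set" where
  "lie_center br = {z. \<forall>x. br z x = 0}"

definition derived_algebra :: "('a::real_vector \<Rightarrow> 'a \<Rightarrow> 'a) \<Rightarrow> 'a set" where
  "derived_algebra br = span {br x y | x y. True}"

definition complex_structure :: "('a::real_vector \<Rightarrow> 'a \<Rightarrow> 'a) \<Rightarrow> ('a \<Rightarrow> 'a) \<Rightarrow> bool" where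
  "complex_structure br J \<longleftrightarrow> linear J \<and> (\<forall>x. J (J x) = - x) \<and>
     (\<forall>x y. br x y - br (J x) (J y) + J (br (J x) y) + J (br x (J y)) = 0)"

definition hermitian_symplectic :: "('a::real_vector \<Rightarrow> 'a \<Rightarrow> 'a) \<Rightarrow> ('a \<Rightarrow> 'a) \<Rightarrow> ('a \<Rightarrow> 'a \<Rightarrow> real) \<Rightarrow> bool" where
  "hermitian_symplectic br J \<Omega> \<longleftrightarrow> bilinear \<Omega> \<and> (\<forall>x y. \<Omega> x y = - \<Omega> y x) \<and>
     (\<forall>x y z. \<Omega> (br x y) z + \<Omega> (br y z) x + \<Omega> (br z x) y = 0) \<and>
     (\<forall>x. x \<noteq> 0 \<longrightarrow> \<Omega> x (J x) > 0)"

end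

theory Submission
  imports Defs
begin

text \<open>Closedness of \<open>\<Omega>\<close> with a central argument \<open>z\<close> kills the two cyclic terms containing \<open>z\<close>
  inside a bracket, so \<open>\<Omega>([x,y], z) = 0\<close>; by linearity \<open>\<Omega>(\<cdot>, z)\<close> vanishes on \<open>[g,g]\<close>.
  If \<open>J z \<in> [g,g]\<close> is non-zero this gives \<open>\<Omega>(z, J z) = -\<Omega>(J z, z) = 0\<close>, contradicting positivity.\<close>

lemma alternating_bilinear_antisym:
  assumes "bilinear br" and "\<And>x. br x x = 0"
  shows "br y x = - br x y"
proof -
  have "0 = br (x + y) (x + y)" using assms(2) by simp
  also have "\<dots> = br x x + br x y + br y x + br y y"
    using assms(1) by (simp add: bilinear_ladd bilinear_radd)
  finally show ?thesis using assms(2) by (simp add: eq_neg_iff_add_eq_0 add.commute)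
qed

lemma lie_center_bracket_right:
  assumes "lie_algebra br" and "z \<in> lie_center br"
  shows "br y z = 0"
proof -
  have "bilinear br" "\<And>x. br x x = 0" using assms(1) unfolding lie_algebra_def by blast+
  then have "br y z = - br z y" by (rule alternating_bilinear_antisym)
  with assms(2) show ?thesis by (simp add: lie_center_def)
qed

lemma closed_form_bracket_center:
  assumes "lie_algebra br" and "bilinear \<Omega>"
    and closed: "\<And>x y z. \<Omega> (br x y) z + \<Omega> (br y z) x + \<Omega> (br z x) y = 0"
    and "z \<in> lie_center br"
  shows "\<Omega> (br x y) z = 0"
proof -
  have "br y z = 0" "br z x = 0"
    using assms(4) lie_center_bracket_right[OF assms(1,4)] by (auto simp: lie_center_def)
  moreover have "\<Omega> 0 u = 0" for u using assms(2) by (simp add: bilinear_lzero)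
  ultimately show ?thesis using closed[of x y z] by simp
qed

lemma closed_form_derived_center:
  assumes "lie_algebra br" and "bilinear \<Omega>"
    and "\<And>x y z. \<Omega> (br x y) z + \<Omega> (br y z) x + \<Omega> (br z x) y = 0"
    and "z \<in> lie_center br" and "v \<in> derived_algebra br"
  shows "\<Omega> v z = 0"
proof -
  have "linear (\<lambda>u. \<Omega> u z)" using assms(2) by (simp add: bilinear_def)
  moreover have "\<Omega> u z = 0" if "u \<in> {br x y | x y. True}" for u
    using that closed_form_bracket_center[OF assms(1-4)] by blast
  ultimately show ?thesis
    using real_vector.linear_eq_0_on_span assms(5) unfolding derived_algebra_def by blast
qed

lemma zero_in_lie_center:
  assumes "lie_algebra br"
  shows "0 \<in> lie_center br"
proof -
  have "bilinear br" using assms by (simp only: lie_algebra_def)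
  then show ?thesis by (simp add: lie_center_def bilinear_lzero)
qed

theorem lemma3p2:
  fixes br :: "'a::real_vector \<Rightarrow> 'a \<Rightarrow> 'a" and J :: "'a \<Rightarrow> 'a"
  assumes "lie_algebra br"
    and "complex_structure br J"
    and "J ` lie_center br \<inter> derived_algebra br \<noteq> {0}"
  shows "\<not> (\<exists>\<Omega>. hermitian_symplectic br J \<Omega>)"
proof
  assume "\<exists>\<Omega>. hermitian_symplectic br J \<Omega>"
  then obtain \<Omega> where \<Omega>: "hermitian_symplectic br J \<Omega>" ..
  have "linear J" using assms(2) unfolding complex_structure_def by blast
  then have "J 0 = 0" by (rule linear_0)
  have "0 \<in> derived_algebra br" unfolding derived_algebra_def by (rule span_zero)
  moreover have "0 \<in> J ` lie_center br"
    using \<open>J 0 = 0\<close> zero_in_lie_center[OF assms(1)] by (metis image_eqI)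
  ultimately have "0 \<in> J ` lie_center br \<inter> derived_algebra br" by (rule IntI[rotated])
  with assms(3) obtain w where "w \<in> J ` lie_center br \<inter> derived_algebra br" "w \<noteq> 0"
    by blast
  then obtain z where z: "z \<in> lie_center br" "J z \<in> derived_algebra br" "J z \<noteq> 0"
    by blast
  with \<open>J 0 = 0\<close> have "z \<noteq> 0" by blast
  have "bilinear \<Omega>" and "\<And>x y z. \<Omega> (br x y) z + \<Omega> (br y z) x + \<Omega> (br z x) y = 0"
    and "\<Omega> z (J z) = - \<Omega> (J z) z" and "\<Omega> z (J z) > 0"
    using \<Omega> \<open>z \<noteq> 0\<close> unfolding hermitian_symplectic_def by blast+
  moreover have "\<Omega> (J z) z = 0"
    using closed_form_derived_center[OF assms(1) calculation(1,2) z(1,2)] .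
  ultimately show False by simp
qed

end
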